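(* Let $s\ge 1$ and $n\ge 2$ be integers and let $A=(a_{i,j})$ be a real $s\times s$ matrix with all entries non-negative. Then \[ s^{\,n-1}\,\mathrm{tr}(A^n)\ \ge\ \big(\mathrm{tr}(A)\big)^n. \] Moreover, for $n=2$ equality holds if and only if $a_{k,k}=a_{1,1}$ for all $k=2,\dots,s$ and $a_{i,j}a_{j,i}=0$ for all $i\ne j$; and for $n\ge 3$, equality $s^{n-1}\mathrm{tr}(A^n)=(\mathrm{tr}A)^n$ implies $a_{k,k}=a_{1,1}$ for all $k=2,\dots,s$. *)

theory Defs
  imports "Jordan_Normal_Form.Matrix"
begin

definition mat_trace :: "'a :: comm_monoid_add mat \<Rightarrow> 'a" where
  "mat_trace A = (\<Sum>i<dim_row A. A $$ (i, i))"

end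

theory Submission
  imports Defs
begin

text \<open>Every term in the expansion of \<open>(A ^ n)\<^sub>i\<^sub>i\<close> is nonnegative, so the diagonal of
  \<open>A ^ n\<close> dominates the \<open>n\<close>-th powers of the diagonal entries \<open>d\<^sub>i\<close> of \<open>A\<close>, and it suffices to
  prove the power mean inequality \<open>s ^ (n - 1) * (\<Sum>i. d\<^sub>i ^ n) \<ge> (\<Sum>i. d\<^sub>i) ^ n\<close>. Summing the
  tangent line bound \<open>x ^ n \<ge> m ^ n + n * m ^ (n - 1) * (x - m)\<close> at the mean \<open>m\<close> of the
  \<open>d\<^sub>i\<close> gives it; the bound is strict for \<open>x \<noteq> m\<close> when \<open>n \<ge> 2\<close>, which yields the equality
  case. For \<open>n = 2\<close> the trace of \<open>A ^ 2\<close> exceeds \<open>\<Sum>i. d\<^sub>i ^ 2\<close> by exactly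
  \<open>\<Sum>i \<noteq> j. a\<^sub>i\<^sub>j * a\<^sub>j\<^sub>i\<close>, so equality forces these products to vanish as well.\<close>

definition power_tangent_gap :: "nat \<Rightarrow> real \<Rightarrow> real \<Rightarrow> real" where
  "power_tangent_gap n m x = x ^ n - (m ^ n + real n * m ^ (n - 1) * (x - m))"

lemma power_tangent_gap_Suc:
  "power_tangent_gap (Suc n) m x = x * power_tangent_gap n m x + real n * m ^ (n - 1) * (x - m)\<^sup>2"
  unfolding power_tangent_gap_def by (cases n) (simp_all add: power2_eq_square algebra_simps)

lemma power_tangent_gap_nonneg:
  assumes "0 \<le> x" "0 \<le> m"
  shows "0 \<le> power_tangent_gap n m x"
proof (induction n)
  case 0
  then show ?case by (simp add: power_tangent_gap_def)
next
  case (Suc n)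
  then show ?case
    using assms by (simp add: power_tangent_gap_Suc)
qed

lemma power_tangent_gap_pos:
  assumes "0 \<le> x" "0 \<le> m" "2 \<le> n" "x \<noteq> m"
  shows "0 < power_tangent_gap n m x"
proof -
  obtain k where n: "n = Suc k" and k: "1 \<le> k"
    using assms(3) by (cases n) auto
  show ?thesis
  proof (cases "m = 0")
    case True
    then show ?thesis
      using assms n k by (simp add: power_tangent_gap_def power_0_left)
  next
    case False
    then have "0 < real k * m ^ (k - 1) * (x - m)\<^sup>2"
      using assms(2,4) k by simp
    then show ?thesis
      using power_tangent_gap_nonneg[OF assms(1,2), of k] assms(1)
      unfolding n power_tangent_gap_Suc by (simp add: add_nonneg_pos)
  qed
qed

lemma power_tangent_gap_eq_0_iff:
  assumes "0 \<le> x" "0 \<le> m" "2 \<le> n"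
  shows "power_tangent_gap n m x = 0 \<longleftrightarrow> x = m"
  using power_tangent_gap_pos[OF assms] by (fastforce simp: power_tangent_gap_def)

text \<open>The tangent lines at the mean sum to \<open>card I * m ^ n\<close>, since the deviations
  \<open>x i - m\<close> sum to zero.\<close>

lemma card_power_mean_gap:
  fixes x :: "'i \<Rightarrow> real"
  assumes "finite I" "I \<noteq> {}" "1 \<le> n"
  defines "m \<equiv> (\<Sum>i\<in>I. x i) / real (card I)"
  shows "real (card I) ^ (n - 1) * (\<Sum>i\<in>I. x i ^ n) - (\<Sum>i\<in>I. x i) ^ n =
    real (card I) ^ (n - 1) * (\<Sum>i\<in>I. power_tangent_gap n m (x i))"
proof -
  define c where "c = real (card I)"
  have c: "0 < c" using assms(1,2) unfolding c_def by (simp add: card_gt_0_iff)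
  have sum_x: "(\<Sum>i\<in>I. x i) = c * m" using c unfolding m_def c_def by simp
  have "(\<Sum>i\<in>I. x i - m) = 0"
    using sum_x unfolding c_def by (simp add: sum_subtractf)
  then have "(\<Sum>i\<in>I. power_tangent_gap n m (x i)) = (\<Sum>i\<in>I. x i ^ n) - c * m ^ n"
    unfolding c_def power_tangent_gap_def
    by (simp add: sum_subtractf sum.distrib sum_distrib_left[symmetric])
  moreover have "c ^ (n - 1) * (c * m ^ n) = (\<Sum>i\<in>I. x i) ^ n"
    using assms(3) sum_x by (simp add: power_mult_distrib power_Suc2[symmetric])
  ultimately show ?thesis
    unfolding c_def by (simp add: right_diff_distrib)
qed

lemma card_power_mean_le:
  fixes x :: "'i \<Rightarrow> real"
  assumes "finite I" "I \<noteq> {}" "1 \<le> n" "\<And>i. i \<in> I \<Longrightarrow> 0 \<le> x i"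
  shows "(\<Sum>i\<in>I. x i) ^ n \<le> real (card I) ^ (n - 1) * (\<Sum>i\<in>I. x i ^ n)"
proof -
  define m where "m = (\<Sum>i\<in>I. x i) / real (card I)"
  have "0 \<le> m" unfolding m_def using assms(4) by (simp add: sum_nonneg)
  then have "0 \<le> real (card I) ^ (n - 1) * (\<Sum>i\<in>I. power_tangent_gap n m (x i))"
    using assms(4) by (intro mult_nonneg_nonneg sum_nonneg power_tangent_gap_nonneg) simp_all
  then show ?thesis
    using card_power_mean_gap[OF assms(1-3), of x] unfolding m_def by simp
qed

lemma card_power_mean_eq_iff:
  fixes x :: "'i \<Rightarrow> real"
  assumes "finite I" "I \<noteq> {}" "2 \<le> n" "\<And>i. i \<in> I \<Longrightarrow> 0 \<le> x i"
  shows "real (card I) ^ (n - 1) * (\<Sum>i\<in>I. x i ^ n) = (\<Sum>i\<in>I. x i) ^ n \<longleftrightarrow>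
    (\<forall>i\<in>I. \<forall>j\<in>I. x i = x j)"
proof -
  define m where "m = (\<Sum>i\<in>I. x i) / real (card I)"
  have m: "0 \<le> m" unfolding m_def using assms(4) by (simp add: sum_nonneg)
  have "real (card I) ^ (n - 1) * (\<Sum>i\<in>I. x i ^ n) - (\<Sum>i\<in>I. x i) ^ n =
      real (card I) ^ (n - 1) * (\<Sum>i\<in>I. power_tangent_gap n m (x i))"
    using card_power_mean_gap[OF assms(1,2), of n x] assms(3) unfolding m_def by simp
  moreover have "0 < real (card I) ^ (n - 1)"
    using assms(1,2) by (simp add: card_gt_0_iff)
  ultimately have "real (card I) ^ (n - 1) * (\<Sum>i\<in>I. x i ^ n) = (\<Sum>i\<in>I. x i) ^ n \<longleftrightarrow>
      (\<Sum>i\<in>I. power_tangent_gap n m (x i)) = 0"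
    by (smt (verit) mult_eq_0_iff)
  also have "\<dots> \<longleftrightarrow> (\<forall>i\<in>I. power_tangent_gap n m (x i) = 0)"
    using assms(1,4) m by (intro sum_nonneg_eq_0_iff power_tangent_gap_nonneg) simp_all
  also have "\<dots> \<longleftrightarrow> (\<forall>i\<in>I. x i = m)"
    using assms(3,4) m by (simp add: power_tangent_gap_eq_0_iff)
  also have "\<dots> \<longleftrightarrow> (\<forall>i\<in>I. \<forall>j\<in>I. x i = x j)"
  proof
    assume const: "\<forall>i\<in>I. \<forall>j\<in>I. x i = x j"
    obtain i0 where i0: "i0 \<in> I" using assms(2) by blast
    have "(\<Sum>i\<in>I. x i) = (\<Sum>i\<in>I. x i0)"
      using const i0 by (intro sum.cong) blast+
    then have "m = x i0"
      using assms(1,2) unfolding m_def by simp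
    then show "\<forall>i\<in>I. x i = m"
      using const i0 by blast
  qed simp
  finally show ?thesis .
qed

lemma sum_off_diagonal_eq_0_iff:
  fixes f :: "'i \<Rightarrow> 'i \<Rightarrow> 'a :: ordered_comm_monoid_add"
  assumes "finite I" "\<And>i j. i \<in> I \<Longrightarrow> j \<in> I \<Longrightarrow> 0 \<le> f i j"
  shows "(\<Sum>i\<in>I. \<Sum>j\<in>I - {i}. f i j) = 0 \<longleftrightarrow> (\<forall>i\<in>I. \<forall>j\<in>I. i \<noteq> j \<longrightarrow> f i j = 0)"
proof -
  have "(\<Sum>i\<in>I. \<Sum>j\<in>I - {i}. f i j) = 0 \<longleftrightarrow> (\<forall>i\<in>I. (\<Sum>j\<in>I - {i}. f i j) = 0)"
    using assms by (intro sum_nonneg_eq_0_iff sum_nonneg) auto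
  also have "\<dots> \<longleftrightarrow> (\<forall>i\<in>I. \<forall>j\<in>I - {i}. f i j = 0)"
    using assms by (intro ball_cong refl sum_nonneg_eq_0_iff) auto
  finally show ?thesis by auto
qed

lemma index_mult_mat_sum:
  fixes A B :: "'a :: semiring_0 mat"
  assumes "A \<in> carrier_mat r m" "B \<in> carrier_mat m c" "i < r" "j < c"
  shows "(A * B) $$ (i, j) = (\<Sum>l<m. A $$ (i, l) * B $$ (l, j))"
  using assms by (simp add: scalar_prod_def atLeast0LessThan)

lemma index_pow_mat_Suc:
  fixes A :: "'a :: semiring_1 mat"
  assumes "A \<in> carrier_mat s s" "i < s" "j < s"
  shows "(A ^\<^sub>m Suc k) $$ (i, j) = (\<Sum>l<s. (A ^\<^sub>m k) $$ (i, l) * A $$ (l, j))"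
  unfolding pow_mat.simps(2) using pow_carrier_mat[OF assms(1)] assms by (rule index_mult_mat_sum)

lemma pow_mat_nonneg:
  fixes A :: "'a :: ordered_semiring_1 mat"
  assumes "A \<in> carrier_mat s s" "\<forall>i<s. \<forall>j<s. 0 \<le> A $$ (i, j)" "i < s" "j < s"
  shows "0 \<le> (A ^\<^sub>m k) $$ (i, j)"
  using assms(3,4)
proof (induction k arbitrary: j)
  case 0
  then show ?case using assms(1) by simp
next
  case (Suc k)
  then show ?case
    unfolding index_pow_mat_Suc[OF assms(1) Suc.prems]
    using assms(2) by (intro sum_nonneg mult_nonneg_nonneg) simp_all
qed

lemma pow_mat_diag_ge:
  fixes A :: "'a :: ordered_semiring_1 mat"
  assumes "A \<in> carrier_mat s s" "\<forall>i<s. \<forall>j<s. 0 \<le> A $$ (i, j)" "i < s"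
  shows "A $$ (i, i) ^ k \<le> (A ^\<^sub>m k) $$ (i, i)"
proof (induction k)
  case 0
  then show ?case using assms(1,3) by simp
next
  case (Suc k)
  have "A $$ (i, i) ^ Suc k \<le> (A ^\<^sub>m k) $$ (i, i) * A $$ (i, i)"
    unfolding power_Suc2 using Suc assms(2,3) by (intro mult_right_mono) simp_all
  also have "\<dots> \<le> (\<Sum>l<s. (A ^\<^sub>m k) $$ (i, l) * A $$ (l, i))"
    using assms pow_mat_nonneg[OF assms(1,2)] by (intro member_le_sum) simp_all
  also have "\<dots> = (A ^\<^sub>m Suc k) $$ (i, i)"
    using index_pow_mat_Suc[OF assms(1,3,3)] by simp
  finally show ?case .
qed

lemma sum_diag_power_le_mat_trace_pow:
  fixes A :: "'a :: ordered_semiring_1 mat"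
  assumes "A \<in> carrier_mat s s" "\<forall>i<s. \<forall>j<s. 0 \<le> A $$ (i, j)"
  shows "(\<Sum>i<s. A $$ (i, i) ^ k) \<le> mat_trace (A ^\<^sub>m k)"
  unfolding mat_trace_def pow_mat_dim_square[OF assms(1)]
  using pow_mat_diag_ge[OF assms] by (intro sum_mono) simp

lemma mat_trace_pow_2:
  fixes A :: "'a :: comm_semiring_1 mat"
  assumes "A \<in> carrier_mat s s"
  shows "mat_trace (A ^\<^sub>m 2) =
    (\<Sum>i<s. A $$ (i, i) ^ 2) + (\<Sum>i<s. \<Sum>j\<in>{..<s} - {i}. A $$ (i, j) * A $$ (j, i))"
proof -
  have "A ^\<^sub>m 2 = A * A"
    using assms by (simp add: numeral_2_eq_2)
  then have "(A ^\<^sub>m 2) $$ (i, i) = A $$ (i, i) ^ 2 + (\<Sum>j\<in>{..<s} - {i}. A $$ (i, j) * A $$ (j, i))"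
    if "i < s" for i
    using index_mult_mat_sum[OF assms assms that that] sum.remove[of "{..<s}" i] that
    by (simp add: power2_eq_square)
  then show ?thesis
    using assms unfolding mat_trace_def by (simp add: sum.distrib)
qed

lemma mat_trace_power_mean_le:
  fixes A :: "real mat"
  assumes "1 \<le> s" "1 \<le> n" "A \<in> carrier_mat s s" "\<forall>i<s. \<forall>j<s. 0 \<le> A $$ (i, j)"
  shows "mat_trace A ^ n \<le> real s ^ (n - 1) * (\<Sum>i<s. A $$ (i, i) ^ n)"
    and "real s ^ (n - 1) * (\<Sum>i<s. A $$ (i, i) ^ n) \<le> real s ^ (n - 1) * mat_trace (A ^\<^sub>m n)"
proof -
  have "{..<s} \<noteq> {}" using assms(1) by (simp add: lessThan_empty_iff)
  then show "mat_trace A ^ n \<le> real s ^ (n - 1) * (\<Sum>i<s. A $$ (i, i) ^ n)"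
    using card_power_mean_le[of "{..<s}" n "\<lambda>i. A $$ (i, i)"] assms
    unfolding mat_trace_def by simp
  show "real s ^ (n - 1) * (\<Sum>i<s. A $$ (i, i) ^ n) \<le> real s ^ (n - 1) * mat_trace (A ^\<^sub>m n)"
    using sum_diag_power_le_mat_trace_pow[OF assms(3,4)] by (simp add: mult_left_mono)
qed

lemma diag_pairwise_eq_iff:
  fixes A :: "'a mat"
  assumes "1 \<le> s"
  shows "(\<forall>i\<in>{..<s}. \<forall>j\<in>{..<s}. A $$ (i, i) = A $$ (j, j)) \<longleftrightarrow> (\<forall>k<s. A $$ (k, k) = A $$ (0, 0))"
proof
  assume const: "\<forall>i\<in>{..<s}. \<forall>j\<in>{..<s}. A $$ (i, i) = A $$ (j, j)"
  have "0 \<in> {..<s}" using assms by simp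
  then show "\<forall>k<s. A $$ (k, k) = A $$ (0, 0)"
    using const by blast
next
  assume "\<forall>k<s. A $$ (k, k) = A $$ (0, 0)"
  then show "\<forall>i\<in>{..<s}. \<forall>j\<in>{..<s}. A $$ (i, i) = A $$ (j, j)"
    by (metis lessThan_iff)
qed

lemma mat_trace_power_mean_eq_imp_diag_const:
  fixes A :: "real mat"
  assumes "1 \<le> s" "2 \<le> n" "A \<in> carrier_mat s s" "\<forall>i<s. \<forall>j<s. 0 \<le> A $$ (i, j)"
    and "real s ^ (n - 1) * mat_trace (A ^\<^sub>m n) = mat_trace A ^ n"
  shows "\<forall>k<s. A $$ (k, k) = A $$ (0, 0)"
proof -
  have "real s ^ (n - 1) * (\<Sum>i<s. A $$ (i, i) ^ n) = (\<Sum>i<s. A $$ (i, i)) ^ n"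
    using mat_trace_power_mean_le[OF assms(1) _ assms(3,4), of n] assms(2,3,5)
    unfolding mat_trace_def by simp
  moreover have "{..<s} \<noteq> {}" using assms(1) by (simp add: lessThan_empty_iff)
  ultimately have "\<forall>i\<in>{..<s}. \<forall>j\<in>{..<s}. A $$ (i, i) = A $$ (j, j)"
    using card_power_mean_eq_iff[of "{..<s}" n "\<lambda>i. A $$ (i, i)"] assms(2,4)
    unfolding card_lessThan by blast
  then show ?thesis
    using diag_pairwise_eq_iff[OF assms(1)] by blast
qed

lemma mat_trace_square_mean_eq_iff:
  fixes A :: "real mat"
  assumes "1 \<le> s" "A \<in> carrier_mat s s" "\<forall>i<s. \<forall>j<s. 0 \<le> A $$ (i, j)"
  shows "real s * mat_trace (A ^\<^sub>m 2) = mat_trace A ^ 2 \<longleftrightarrow>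
    (\<forall>k<s. A $$ (k, k) = A $$ (0, 0)) \<and>
    (\<forall>i<s. \<forall>j<s. i \<noteq> j \<longrightarrow> A $$ (i, j) * A $$ (j, i) = 0)"
proof -
  define D where "D = (\<Sum>i<s. A $$ (i, i) ^ 2)"
  define Off where "Off = (\<Sum>i<s. \<Sum>j\<in>{..<s} - {i}. A $$ (i, j) * A $$ (j, i))"
  have "mat_trace A ^ 2 \<le> real s * D"
    using mat_trace_power_mean_le(1)[OF assms(1) _ assms(2,3), of 2] unfolding D_def by simp
  moreover have "0 \<le> Off"
    unfolding Off_def using assms(3) by (intro sum_nonneg mult_nonneg_nonneg) auto
  moreover have "mat_trace (A ^\<^sub>m 2) = D + Off"
    using mat_trace_pow_2[OF assms(2)] unfolding D_def Off_def .
  moreover have "real s * Off = 0 \<longleftrightarrow> Off = 0"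
    using assms(1) by simp
  ultimately have "real s * mat_trace (A ^\<^sub>m 2) = mat_trace A ^ 2 \<longleftrightarrow>
      real s * D = mat_trace A ^ 2 \<and> Off = 0"
    by (smt (verit) distrib_left mult_nonneg_nonneg of_nat_0_le_iff)
  moreover have "real s * D = mat_trace A ^ 2 \<longleftrightarrow>
      (\<forall>i\<in>{..<s}. \<forall>j\<in>{..<s}. A $$ (i, i) = A $$ (j, j))"
    using card_power_mean_eq_iff[of "{..<s}" 2 "\<lambda>i. A $$ (i, i)"] assms
    unfolding D_def mat_trace_def by (simp add: lessThan_empty_iff)
  moreover have "Off = 0 \<longleftrightarrow> (\<forall>i<s. \<forall>j<s. i \<noteq> j \<longrightarrow> A $$ (i, j) * A $$ (j, i) = 0)"
    using sum_off_diagonal_eq_0_iff[of "{..<s}" "\<lambda>i j. A $$ (i, j) * A $$ (j, i)"] assms(3)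
    unfolding Off_def by (simp add: Ball_def)
  ultimately show ?thesis
    using diag_pairwise_eq_iff[OF assms(1)] by blast
qed

theorem lemma2p12:
  fixes A :: "real mat" and s n :: nat
  assumes "s \<ge> 1" and "n \<ge> 2" and "A \<in> carrier_mat s s"
    and "\<forall>i<s. \<forall>j<s. A $$ (i, j) \<ge> 0"
  shows "real s ^ (n - 1) * mat_trace (A ^\<^sub>m n) \<ge> (mat_trace A) ^ n
    \<and> (n = 2 \<longrightarrow>
         (real s ^ (n - 1) * mat_trace (A ^\<^sub>m n) = (mat_trace A) ^ n \<longleftrightarrow>
           (\<forall>k<s. A $$ (k, k) = A $$ (0, 0)) \<and>
           (\<forall>i<s. \<forall>j<s. i \<noteq> j \<longrightarrow> A $$ (i, j) * A $$ (j, i) = 0)))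
    \<and> (n \<ge> 3 \<longrightarrow>
         real s ^ (n - 1) * mat_trace (A ^\<^sub>m n) = (mat_trace A) ^ n \<longrightarrow>
           (\<forall>k<s. A $$ (k, k) = A $$ (0, 0)))"
proof (intro conjI impI)
  show "mat_trace A ^ n \<le> real s ^ (n - 1) * mat_trace (A ^\<^sub>m n)"
    using mat_trace_power_mean_le[OF assms(1) _ assms(3,4), of n] assms(2) by linarith
next
  assume "n = 2"
  then show "real s ^ (n - 1) * mat_trace (A ^\<^sub>m n) = mat_trace A ^ n \<longleftrightarrow>
      (\<forall>k<s. A $$ (k, k) = A $$ (0, 0)) \<and>
      (\<forall>i<s. \<forall>j<s. i \<noteq> j \<longrightarrow> A $$ (i, j) * A $$ (j, i) = 0)"
    using mat_trace_square_mean_eq_iff[OF assms(1,3,4)] by simp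
next
  assume "3 \<le> n" "real s ^ (n - 1) * mat_trace (A ^\<^sub>m n) = mat_trace A ^ n"
  then show "\<forall>k<s. A $$ (k, k) = A $$ (0, 0)"
    using mat_trace_power_mean_eq_imp_diag_const[OF assms(1,2,3,4)] by blast
qed

end
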